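(* Let $f:\{0,1\}^n\to\{0,1\}^m$ be a fully balanced function with $r=\dim\operatorname{img}(f)\in\{1,2\}$. Consider the procedure: set $C=B=\varnothing$. Repeat: choose $\mathbf{y}\in\{0,1\}^m\setminus\langle C\cup B\rangle$ and query $\mathbf{y}$. If $\mathbf{y}\in C(f)$, add $\mathbf{y}$ to $C$. Otherwise, if $B=\varnothing$, add $\mathbf{y}$ to $B$; if $B\neq\varnothing$, take $\mathbf{s}\in B$, put $\mathbf{y}'=\mathbf{s}\oplus\mathbf{y}$ and query $\mathbf{y}'$: if $\mathbf{y}'\in C(f)$ add $\mathbf{y}'$ to $C$, otherwise add $\mathbf{y},\mathbf{y}'$ to $B$ and stop with output $r=2$. Whenever $\#C=m-1$, stop with output $r=1$. Then the procedure always outputs the correct value of $r$, using at most $2m-1$ oracle queries.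
   Context: Strings in $\{0,1\}^k$ are identified with vectors of $\mathbb{F}_2^k$; $\oplus$ is bitwise addition mod 2; $\mathbf{a}\cdot\mathbf{b}=\bigoplus_i a_ib_i$; $\langle X\rangle$ is the linear span of $X$. $f$ is $\mathbf{y}$-balanced if $f(\mathbf{x})\cdot\mathbf{y}=0$ for exactly half of the $\mathbf{x}$ and $=1$ for the other half, and $\mathbf{y}$-constant if $f(\mathbf{x})\cdot\mathbf{y}$ is the same for all $\mathbf{x}$. $f$ is fully balanced if for every $\mathbf{y}$ it is $\mathbf{y}$-balanced or $\mathbf{y}$-constant; then $\operatorname{img}(f)$ is an affine subspace. $C(f)=\{\mathbf{y}: f\text{ is }\mathbf{y}\text{-constant}\}$. A query on $\mathbf{y}$ reports whether $\mathbf{y}\in C(f)$ (one run of the Generalised Phase Kick-Back algorithm with marker $\mathbf{y}$, whose output is $\mathbf{0}$ exactly when $f$ is $\mathbf{y}$-constant, for fully balanced $f$). *)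

theory Defs
  imports "HOL-Analysis.Analysis" "HOL-Library.Z2"
begin

text \<open>Strings in {0,1}^k are vectors of F_2^k, modelled as bit ^ 'k with k = CARD('k).
  Addition (+) on bit ^ 'k is bitwise XOR; vec.span and vec.dim are the linear span and
  dimension over the field F_2 = bit.\<close>

definition dotp :: "bit ^ 'k \<Rightarrow> bit ^ 'k \<Rightarrow> bit" where
  "dotp a b = (\<Sum>i\<in>UNIV. a $ i * b $ i)"

definition y_balanced :: "(bit ^ 'n \<Rightarrow> bit ^ 'm) \<Rightarrow> bit ^ 'm \<Rightarrow> bool" where
  "y_balanced f y \<longleftrightarrow> card {x. dotp (f x) y = 0} = card {x. dotp (f x) y = 1}"

definition y_constant :: "(bit ^ 'n \<Rightarrow> bit ^ 'm) \<Rightarrow> bit ^ 'm \<Rightarrow> bool" where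
  "y_constant f y \<longleftrightarrow> (\<forall>x x'. dotp (f x) y = dotp (f x') y)"

definition fully_balanced :: "(bit ^ 'n \<Rightarrow> bit ^ 'm) \<Rightarrow> bool" where
  "fully_balanced f \<longleftrightarrow> (\<forall>y. y_balanced f y \<or> y_constant f y)"

definition const_set :: "(bit ^ 'n \<Rightarrow> bit ^ 'm) \<Rightarrow> (bit ^ 'm) set" where
  "const_set f = {y. y_constant f y}"

definition affine_dim :: "(bit ^ 'm) set \<Rightarrow> nat" where
  "affine_dim S = vec.dim {u - v | u v. u \<in> S \<and> v \<in> S}"

text \<open>States of the procedure: Running C B q (q = number of oracle queries so far),
  or Stopped output q.\<close>
datatype 'v state = Running "'v set" "'v set" nat | Stopped nat nat

text \<open>One (nondeterministic) iteration of the procedure; Cf is the set C(f) answered by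
  the query oracle, m the output length.\<close>
inductive proc_step :: "(bit ^ 'm) set \<Rightarrow> (bit ^ 'm) state \<Rightarrow> (bit ^ 'm) state \<Rightarrow> bool"
  for Cf :: "(bit ^ 'm) set" where
  stop1: "card C = CARD('m) - 1 \<Longrightarrow> proc_step Cf (Running C B q) (Stopped 1 q)"
| addC: "card C \<noteq> CARD('m) - 1 \<Longrightarrow> y \<notin> vec.span (C \<union> B) \<Longrightarrow> y \<in> Cf \<Longrightarrow>
         proc_step Cf (Running C B q) (Running (insert y C) B (q + 1))"
| addB: "card C \<noteq> CARD('m) - 1 \<Longrightarrow> y \<notin> vec.span (C \<union> B) \<Longrightarrow> y \<notin> Cf \<Longrightarrow> B = {} \<Longrightarrow>
         proc_step Cf (Running C B q) (Running C {y} (q + 1))"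
| addC2: "card C \<noteq> CARD('m) - 1 \<Longrightarrow> y \<notin> vec.span (C \<union> B) \<Longrightarrow> y \<notin> Cf \<Longrightarrow> s \<in> B \<Longrightarrow>
         s + y \<in> Cf \<Longrightarrow>
         proc_step Cf (Running C B q) (Running (insert (s + y) C) B (q + 2))"
| stop2: "card C \<noteq> CARD('m) - 1 \<Longrightarrow> y \<notin> vec.span (C \<union> B) \<Longrightarrow> y \<notin> Cf \<Longrightarrow> s \<in> B \<Longrightarrow>
         s + y \<notin> Cf \<Longrightarrow>
         proc_step Cf (Running C B q) (Stopped 2 (q + 2))"

end

theory Submission imports Defs begin

text \<open>C(f) is the annihilator of the direction space of img f, a subspace of dimension at most
  m - r. The procedure keeps C \<union> B linearly independent with C \<subseteq> C(f) and B a single vector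
  outside C(f), and at most two queries are spent per element of C and one on B. Hence #C \<le> m - r:
  for r = 2 the count m - 1 is never reached, and for r = 1 C(f) is a hyperplane, so the sum of
  two markers outside it lies in it and the procedure cannot output 2. The same bound gives
  progress, termination and at most 2(m - 1) + 1 queries.\<close>

lemma dotp_add_left: "dotp (a + b) y = dotp a y + dotp b y"
  unfolding dotp_def vector_add_component distrib_right by (rule sum.distrib)

lemma dotp_add_right: "dotp y (a + b) = dotp y a + dotp y b"
  unfolding dotp_def vector_add_component distrib_left by (rule sum.distrib)

lemma dotp_diff_left: "dotp (a - b) y = dotp a y - dotp b y"
  unfolding dotp_def vector_minus_component left_diff_distrib by (rule sum_subtractf)

lemma dotp_scale_left: "dotp (c *s a) y = c * dotp a y"
  unfolding dotp_def vector_smult_component sum_distrib_left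
  by (rule sum.cong) (simp_all only: ac_simps)

lemma dotp_scale_right: "dotp y (c *s a) = c * dotp y a"
  unfolding dotp_def vector_smult_component sum_distrib_left
  by (rule sum.cong) (simp_all only: ac_simps)

lemma dotp_zero_left [simp]: "dotp 0 y = 0"
  unfolding dotp_def by simp

lemma dotp_zero_right [simp]: "dotp y 0 = 0"
  unfolding dotp_def by simp

lemma dotp_axis [simp]: "dotp a (axis i 1) = a $ i"
  unfolding dotp_def axis_def by (simp add: if_distrib cong: if_cong)

lemma exists_dotp_separating:
  fixes a b :: "bit ^ 'k"
  assumes "a \<noteq> 0" "a \<noteq> b"
  shows "\<exists>u. dotp a u = 1 \<and> dotp b u = 0"
proof -
  obtain k where k: "a $ k \<noteq> b $ k" using assms(2) vec_eq_iff by auto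
  obtain i where i: "a $ i = 1" using assms(1) by (metis bit_not_zero_iff vec_eq_iff zero_index)
  show ?thesis
  proof (cases "a $ k = 1")
    case True
    then show ?thesis using k by (intro exI[of _ "axis k 1"]) simp
  next
    case False
    then have "a $ k = 0" "b $ k = 1" using k by auto
    then show ?thesis
    proof (cases "b $ i")
      case zero
      then show ?thesis using i by (intro exI[of _ "axis i 1"]) simp
    next
      case one
      then show ?thesis using i \<open>a $ k = 0\<close> \<open>b $ k = 1\<close>
        by (intro exI[of _ "axis i 1 + axis k 1"]) (simp add: dotp_add_right flip: one_add_one)
    qed
  qed
qed

definition annihilator :: "(bit ^ 'k) set \<Rightarrow> (bit ^ 'k) set" where
  "annihilator D = {y. \<forall>d\<in>D. dotp d y = 0}"

lemma annihilator_empty [simp]: "annihilator {} = UNIV"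
  by (simp add: annihilator_def)

lemma annihilator_antimono: "D \<subseteq> E \<Longrightarrow> annihilator E \<subseteq> annihilator D"
  by (auto simp: annihilator_def)

lemma subspace_annihilator: "vec.subspace (annihilator D)"
  unfolding vec.subspace_def annihilator_def by (simp add: dotp_add_right dotp_scale_right)

lemma annihilator_span: "annihilator (vec.span D) = annihilator D"
proof
  show "annihilator (vec.span D) \<subseteq> annihilator D"
    by (rule annihilator_antimono) (rule vec.span_superset)
next
  show "annihilator D \<subseteq> annihilator (vec.span D)"
  proof
    fix y assume "y \<in> annihilator D"
    moreover have "vec.subspace {d. dotp d y = 0}"
      unfolding vec.subspace_def by (simp add: dotp_add_left dotp_scale_left)
    ultimately have "vec.span D \<subseteq> {d. dotp d y = 0}"
      by (intro vec.span_minimal) (auto simp: annihilator_def)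
    then show "y \<in> annihilator (vec.span D)" by (auto simp: annihilator_def)
  qed
qed

lemma dim_annihilator_psubset:
  "annihilator D \<subset> annihilator E \<Longrightarrow> vec.dim (annihilator D) < vec.dim (annihilator E)"
  by (metis subspace_annihilator vec.span_eq_iff vec.dim_psubset)

lemma dim_annihilator_singleton:
  fixes d :: "bit ^ 'k"
  assumes "d \<noteq> 0"
  shows "vec.dim (annihilator {d}) + 1 \<le> CARD('k)"
proof -
  obtain i where "d $ i = 1" using assms by (metis bit_not_zero_iff vec_eq_iff zero_index)
  then have "axis i 1 \<notin> annihilator {d}" by (simp add: annihilator_def)
  then have "annihilator {d} \<subset> annihilator {}" unfolding annihilator_empty by blast
  then have "vec.dim (annihilator {d}) < vec.dim (annihilator ({} :: (bit ^ 'k) set))"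
    by (rule dim_annihilator_psubset)
  then show ?thesis using vec_dim_card[where 'a=bit and 'n='k] by simp
qed

lemma dim_annihilator_pair:
  fixes d1 d2 :: "bit ^ 'k"
  assumes "d1 \<noteq> 0" "d2 \<noteq> 0" "d1 \<noteq> d2"
  shows "vec.dim (annihilator {d1, d2}) + 2 \<le> CARD('k)"
proof -
  obtain u where "dotp d1 u = 1" "dotp d2 u = 0"
    using exists_dotp_separating[OF assms(1,3)] by blast
  then have "u \<in> annihilator {d2} - annihilator {d1, d2}" by (simp add: annihilator_def)
  then have "annihilator {d1, d2} \<subset> annihilator {d2}"
    using annihilator_antimono[of "{d2}" "{d1, d2}"] by blast
  then have "vec.dim (annihilator {d1, d2}) < vec.dim (annihilator {d2})"
    by (rule dim_annihilator_psubset)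
  then show ?thesis using dim_annihilator_singleton[OF assms(2)] by linarith
qed

lemma const_set_eq_annihilator:
  "const_set f = annihilator {u - v |u v. u \<in> range f \<and> v \<in> range f}"
proof -
  have "dotp (f x - f x') y = 0 \<longleftrightarrow> dotp (f x) y = dotp (f x') y" for x x' y
    by (simp only: dotp_diff_left right_minus_eq)
  then show ?thesis
    unfolding const_set_def y_constant_def annihilator_def by blast
qed

locale rank_oracle =
  fixes Cf :: "(bit ^ 'm) set" and r :: nat
  assumes rank_cases: "r \<in> {1, 2}"
    and dim_oracle_le: "vec.dim Cf + r \<le> CARD('m)"
    and add_outside_rank1: "r = 1 \<Longrightarrow> s \<notin> Cf \<Longrightarrow> y \<notin> Cf \<Longrightarrow> s + y \<in> Cf"

lemma rank_oracle_const_set: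
  fixes f :: "bit ^ 'n \<Rightarrow> bit ^ 'm"
  assumes "r = affine_dim (range f)" "r \<in> {1, 2}"
  shows "rank_oracle (const_set f) r"
proof -
  define D where "D = {u - v |u v. u \<in> range f \<and> v \<in> range f}"
  obtain Bs where Bs: "Bs \<subseteq> D" "vec.independent Bs" "D \<subseteq> vec.span Bs" "card Bs = r"
    using vec.basis_exists[of D] assms(1) unfolding affine_dim_def D_def by blast
  have "vec.span D = vec.span Bs"
    using Bs(1,3) vec.span_superset[of D] by (simp add: vec.span_eq)
  then have Cf: "const_set f = annihilator Bs"
    using annihilator_span[of D] annihilator_span[of Bs] const_set_eq_annihilator[of f]
    unfolding D_def by simp
  have "0 \<notin> Bs" using Bs(2) vec.dependent_zero by blast
  show ?thesis
  proof (cases "r = 1")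
    case True
    then obtain d where d: "Bs = {d}" "d \<noteq> 0"
      using Bs(4) \<open>0 \<notin> Bs\<close> card_1_singletonE[of Bs] by blast
    have "s + y \<in> annihilator {d}" if "s \<notin> annihilator {d}" "y \<notin> annihilator {d}" for s y
      using that by (simp add: annihilator_def dotp_add_right flip: one_add_one)
    with True Cf d dim_annihilator_singleton[of d] show ?thesis
      by unfold_locales simp_all
  next
    case False
    then have "r = 2" using assms(2) by blast
    then obtain d1 d2 where d: "Bs = {d1, d2}" "d1 \<noteq> d2"
      using Bs(4) card_2_iff[of Bs] by blast
    then have "d1 \<noteq> 0" "d2 \<noteq> 0" using \<open>0 \<notin> Bs\<close> by auto
    with \<open>r = 2\<close> Cf d dim_annihilator_pair[of d1 d2] show ?thesis
      by unfold_locales simp_all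
  qed
qed

text \<open>C and B are the sets of the procedure, q the number of queries spent: two for each
  element of C found via s + y, one for each other element of C \<union> B.\<close>

definition proc_inv :: "(bit ^ 'm) set \<Rightarrow> (bit ^ 'm) set \<Rightarrow> (bit ^ 'm) set \<Rightarrow> nat \<Rightarrow> bool" where
  "proc_inv Cf C B q \<longleftrightarrow> C \<subseteq> Cf \<and> B \<inter> Cf = {} \<and> (B = {} \<or> (\<exists>s. B = {s})) \<and>
     vec.independent (C \<union> B) \<and> q \<le> 2 * card C + card B"

lemma proc_inv_init: "proc_inv Cf {} {} 0"
  by (simp add: proc_inv_def vec.independent_empty)

lemma proc_inv_finite: "proc_inv Cf C B q \<Longrightarrow> finite C \<and> finite B"
  unfolding proc_inv_def by (metis finite_Un vec.finiteI_independent)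

lemma independent_insert_outside_span:
  "vec.independent S \<Longrightarrow> y \<notin> vec.span S \<Longrightarrow> vec.independent (insert y S) \<and> y \<notin> S"
  by (metis vec.independent_insertI vec.span_base)

lemma proc_step_preserves_inv:
  assumes inv: "proc_inv Cf C B q" and step: "proc_step Cf (Running C B q) (Running C' B' q')"
  shows "proc_inv Cf C' B' q'"
proof -
  have C: "C \<subseteq> Cf" "finite C" and B: "B \<inter> Cf = {}" "B = {} \<or> (\<exists>s. B = {s})"
    and indep: "vec.independent (C \<union> B)" and q: "q \<le> 2 * card C + card B"
    using inv proc_inv_finite[OF inv] by (auto simp: proc_inv_def)
  have insert_C: "vec.independent (insert c C \<union> B) \<and> card (insert c C) = card C + 1"
    if "c \<notin> vec.span (C \<union> B)" for c
    using independent_insert_outside_span[OF indep that] C(2) by simp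
  from step show ?thesis
  proof cases
    case (addC y)
    then show ?thesis using C B q insert_C[of y] by (simp add: proc_inv_def)
  next
    case (addB y)
    then show ?thesis
      using C q independent_insert_outside_span[OF indep, of y] by (simp add: proc_inv_def)
  next
    case (addC2 y s)
    have "s \<in> vec.span (C \<union> B)" using addC2 vec.span_superset by blast
    then have "s + y \<notin> vec.span (C \<union> B)"
      using addC2 vec.span_add_eq by blast
    then show ?thesis using addC2 C B q insert_C[of "s + y"] by (auto simp: proc_inv_def)
  qed
qed

fun queries :: "'v state \<Rightarrow> nat" where
  "queries (Running C B q) = q" | "queries (Stopped out q) = q"

lemma proc_step_from_running: "proc_step Cf s t \<Longrightarrow> \<exists>C B q. s = Running C B q"
  by (auto elim: proc_step.cases)

lemma proc_step_queries_less:
  "proc_step Cf (Running C B q) (Running C' B' q') \<Longrightarrow> q < q'"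
  by (auto elim: proc_step.cases)

lemma card_singleton_le: "B = {} \<or> (\<exists>s. B = {s}) \<Longrightarrow> card B \<le> 1"
  by auto

context rank_oracle
begin

lemma card_collected_le:
  assumes "proc_inv Cf C B q"
  shows "card C + r \<le> CARD('m)"
proof -
  have "C \<subseteq> Cf" "vec.independent C"
    using assms vec.independent_mono[of "C \<union> B" C] by (auto simp: proc_inv_def)
  then have "card C \<le> vec.dim Cf" by (rule vec.independent_card_le_dim)
  then show ?thesis using dim_oracle_le by linarith
qed

lemma queries_le:
  assumes "proc_inv Cf C B q"
  shows "q \<le> 2 * CARD('m) - 1"
proof -
  have "q \<le> 2 * card C + card B" "card B \<le> 1"
    using assms card_singleton_le by (auto simp: proc_inv_def)
  moreover have "card C + 1 \<le> CARD('m)" using card_collected_le[OF assms] rank_cases by auto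
  ultimately show ?thesis by linarith
qed

lemma proc_step_stopped_correct:
  assumes inv: "proc_inv Cf C B q" and step: "proc_step Cf (Running C B q) (Stopped out q')"
  shows "out = r \<and> q' \<le> 2 * CARD('m) - 1"
  using step
proof cases
  case stop1
  have "r \<noteq> 2" using stop1 card_collected_le[OF inv] by auto
  then show ?thesis using stop1 rank_cases queries_le[OF inv] by auto
next
  case (stop2 y s)
  have "s \<notin> Cf" using stop2 inv by (auto simp: proc_inv_def)
  then have "r \<noteq> 1" using add_outside_rank1 stop2 by blast
  then have r2: "r = 2" using rank_cases by blast
  have "B = {s}" using stop2 inv by (auto simp: proc_inv_def)
  then have "q \<le> 2 * card C + 1" using inv by (simp add: proc_inv_def)
  then show ?thesis using stop2 r2 card_collected_le[OF inv] by linarith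
qed

lemma reachable_state_correct:
  assumes "(proc_step Cf)\<^sup>*\<^sup>* (Running {} {} 0) s"
  shows "case s of Running C B q \<Rightarrow> proc_inv Cf C B q
          | Stopped out q \<Rightarrow> out = r \<and> q \<le> 2 * CARD('m) - 1"
  using assms
proof (induction rule: rtranclp_induct)
  case base
  then show ?case by (simp add: proc_inv_init)
next
  case (step s t)
  then obtain C B q where s: "s = Running C B q" using proc_step_from_running by blast
  with step have inv: "proc_inv Cf C B q" by simp
  show ?case
  proof (cases t)
    case Running
    then show ?thesis using proc_step_preserves_inv[OF inv] step(2) s by simp
  next
    case Stopped
    then show ?thesis using proc_step_stopped_correct[OF inv] step(2) s by simp
  qed
qed

lemma exists_outside_span:
  assumes inv: "proc_inv Cf C B q" and "card C \<noteq> CARD('m) - 1"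
  shows "\<exists>y. y \<notin> vec.span (C \<union> B)"
proof -
  have "card C + card B \<le> CARD('m) - 1"
    using assms card_collected_le[OF inv] rank_cases card_singleton_le[of B]
    by (auto simp: proc_inv_def)
  then have "card (C \<union> B) < vec.dim (UNIV :: (bit ^ 'm) set)"
    using card_Un_le[of C B] vec_dim_card[where 'a=bit and 'n='m] zero_less_card_finite[where 'a='m]
    by linarith
  then show ?thesis
    using vec.span_card_ge_dim[of "C \<union> B" UNIV] proc_inv_finite[OF inv] by auto
qed

lemma proc_step_progress:
  assumes inv: "proc_inv Cf C B q"
  shows "\<exists>t. proc_step Cf (Running C B q) t"
proof (cases "card C = CARD('m) - 1")
  case True
  then show ?thesis using proc_step.stop1 by blast
next
  case running: False
  then obtain y where y: "y \<notin> vec.span (C \<union> B)" using exists_outside_span[OF inv] by blast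
  consider "y \<in> Cf" | "y \<notin> Cf" "B = {}" | s where "y \<notin> Cf" "s \<in> B" by blast
  then show ?thesis
  proof cases
    case 1
    then show ?thesis using proc_step.addC[OF running y] by blast
  next
    case 2
    then show ?thesis using proc_step.addB[OF running y] by blast
  next
    case (3 s)
    then show ?thesis using proc_step.addC2[OF running y] proc_step.stop2[OF running y] by blast
  qed
qed

lemma no_infinite_run:
  "\<nexists>g. g 0 = Running {} {} 0 \<and> (\<forall>i. proc_step Cf (g i) (g (Suc i)))"
proof
  assume "\<exists>g. g 0 = Running {} {} 0 \<and> (\<forall>i. proc_step Cf (g i) (g (Suc i)))"
  then obtain g where g0: "g 0 = Running {} {} 0" and run: "\<And>i. proc_step Cf (g i) (g (Suc i))"
    by blast
  have reach: "(proc_step Cf)\<^sup>*\<^sup>* (Running {} {} 0) (g i)" for i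
    by (induction i) (use g0 run in \<open>auto intro: rtranclp.rtrancl_into_rtrancl\<close>)
  have running: "\<exists>C B q. g i = Running C B q" for i
    using run proc_step_from_running by blast
  have "i \<le> queries (g i)" for i
  proof (induction i)
    case (Suc i)
    obtain C B q C' B' q' where "g i = Running C B q" "g (Suc i) = Running C' B' q'"
      using running by blast
    then show ?case using Suc run[of i] proc_step_queries_less by fastforce
  qed simp
  moreover have "queries (g i) \<le> 2 * CARD('m) - 1" for i
    using running[of i] reachable_state_correct[OF reach[of i]] queries_le by fastforce
  ultimately show False by (metis Suc_n_not_le_n le_trans diff_le_self)
qed

end

theorem mainTheorem9:
  fixes f :: "bit ^ 'n \<Rightarrow> bit ^ 'm" and r :: nat
  assumes "fully_balanced f"
    and "r = affine_dim (range f)"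
    and "r \<in> {1, 2}"
  shows "(\<nexists>g. g 0 = Running {} {} 0 \<and> (\<forall>i. proc_step (const_set f) (g i) (g (Suc i))))
    \<and> (\<forall>C B q. (proc_step (const_set f))\<^sup>*\<^sup>* (Running {} {} 0) (Running C B q)
          \<longrightarrow> (\<exists>s'. proc_step (const_set f) (Running C B q) s'))
    \<and> (\<forall>out q. (proc_step (const_set f))\<^sup>*\<^sup>* (Running {} {} 0) (Stopped out q)
          \<longrightarrow> out = r \<and> q \<le> 2 * CARD('m) - 1)"
proof -
  interpret rank_oracle "const_set f" r
    using rank_oracle_const_set assms(2,3) by blast
  show ?thesis
    using no_infinite_run reachable_state_correct proc_step_progress by fastforce
qed

end
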